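(* Let $K\ge2$ be a constant integer, $m=m(n)$ positive integers and $p=p(n)=o(1/n)$. Then $$d_{TV}\!\left(\bigcup_{k=2}^{K}\mathcal H_k(n,m,p),\ \bigcup_{k=2}^{K}H^{(k)}\!\left(n,1-\exp(-mp^k(1-p)^{n-k})\right)\right)=o(1),$$ where the hypergraphs $H^{(k)}(n,1-\exp(-mp^k(1-p)^{n-k}))$, $k=2,\dots,K$, are independent.
   Context: In the random intersection model with vertex set $\mathcal V$ ($|\mathcal V|=n$) and object set $\mathcal W$ ($|\mathcal W|=m$), each vertex $v$ gets $W(v)\subseteq\mathcal W$ where the events $w\in W(v)$ are independent with probability $p$; put $V(w)=\{v\in\mathcal V: w\in W(v)\}$. $\mathcal H_k(n,m,p)$ is the hypergraph on $\mathcal V$ whose edge set is $\{V(w): w\in\mathcal W,\ |V(w)|=k\}$ (as a set of $k$-subsets). $H^{(k)}(n,r)$ denotes the random $k$-uniform hypergraph on $\mathcal V$ in which each $k$-subset is an edge independently with probability $r$. Unions of hypergraphs on the same vertex set are taken edge-wise. $d_{TV}(X,Y)=\max_A|\Pr\{X\in A\}-\Pr\{Y\in A\}|$ is the total variation distance. *)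

theory Defs
  imports "HOL-Probability.Probability" "HOL-Library.Landau_Symbols"
begin

definition dTV :: "'a pmf \<Rightarrow> 'a pmf \<Rightarrow> real" where
  "dTV P Q = (SUP A. \<bar>measure_pmf.prob P A - measure_pmf.prob Q A\<bar>)"

text \<open>Random intersection model: vertices {..<n}, objects {..<m}; the pair (v,w)
  means w \<in> W(v), each independently with probability p.\<close>
definition rim :: "nat \<Rightarrow> nat \<Rightarrow> real \<Rightarrow> (nat \<times> nat \<Rightarrow> bool) pmf" where
  "rim n m p = Pi_pmf ({..<n} \<times> {..<m}) False (\<lambda>_. bernoulli_pmf p)"

definition Vobj :: "nat \<Rightarrow> (nat \<times> nat \<Rightarrow> bool) \<Rightarrow> nat \<Rightarrow> nat set" where
  "Vobj n f w = {v \<in> {..<n}. f (v, w)}"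

definition Hk_edges :: "nat \<Rightarrow> nat \<Rightarrow> nat \<Rightarrow> (nat \<times> nat \<Rightarrow> bool) \<Rightarrow> nat set set" where
  "Hk_edges k n m f = {Vobj n f w | w. w < m \<and> card (Vobj n f w) = k}"

definition union_rim :: "nat \<Rightarrow> nat \<Rightarrow> nat \<Rightarrow> real \<Rightarrow> nat set set pmf" where
  "union_rim K n m p = map_pmf (\<lambda>f. \<Union>k\<in>{2..K}. Hk_edges k n m f) (rim n m p)"

definition binom_hyp :: "nat \<Rightarrow> nat \<Rightarrow> real \<Rightarrow> nat set set pmf" where
  "binom_hyp k n r = map_pmf (\<lambda>g. {S. S \<subseteq> {..<n} \<and> card S = k \<and> g S})
     (Pi_pmf {S. S \<subseteq> {..<n} \<and> card S = k} False (\<lambda>_. bernoulli_pmf r))"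

definition union_binom :: "nat \<Rightarrow> nat \<Rightarrow> (nat \<Rightarrow> real) \<Rightarrow> nat set set pmf" where
  "union_binom K n r = map_pmf (\<lambda>H. \<Union>k\<in>{2..K}. H k)
     (Pi_pmf {2..K} {} (\<lambda>k. binom_hyp k n (r k)))"

end

theory Submission
  imports Defs
begin

(* Let D be the law of V(w) for one object w (a p-random subset of the n vertices), let R be
   the family of vertex sets of size 2..K, Q = D(R) and \<tau> = D conditioned on R.
   (1) The union of the H_k(n,m,p) is the set of N independent \<tau>-samples, N ~ Bin(m,Q);
       the union of the independent binomial hypergraphs is the same with N ~ Poi(mQ).
       Both identities are proved by comparing Pr[X \<subseteq> G] for all G, which determines
       a distribution on subsets of the finite family R.
   (2) Mixing any kernel over Bin(m,s^2) rather than Poi(m s^2) changes the law by at most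
       10 s in total variation (for s \<le> 1/16, uniformly in m): by Chebyshev both laws live
       on a window of width sqrt (m s) around the mean, on which the ratio of their point
       probabilities is almost constant.
   (3) Q \<le> K (np)^2, which tends to 0 since p = o(1/n).
   Applying (2) with s = sqrt Q to the representations (1) bounds the distance by
   10 sqrt Q, which tends to 0 by (3). *)

section \<open>Total variation distance of mixtures\<close>

lemma dTV_nonneg: "0 \<le> dTV P Q"
proof -
  have bdd: "\<bar>measure_pmf.prob P A - measure_pmf.prob Q A\<bar> \<le> 1" for A
  proof -
    have "0 \<le> measure_pmf.prob P A" "measure_pmf.prob P A \<le> 1"
      "0 \<le> measure_pmf.prob Q A" "measure_pmf.prob Q A \<le> 1" by auto
    then show ?thesis by linarith
  qed
  have "\<bar>measure_pmf.prob P {} - measure_pmf.prob Q {}\<bar> \<le> dTV P Q"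
    unfolding dTV_def by (rule cSUP_upper) (auto intro!: bdd_aboveI[where M=1] bdd)
  then show ?thesis by simp
qed

lemma dTV_self: "dTV P P = 0"
  unfolding dTV_def by simp

lemma prob_bind_pmf:
  "measure_pmf.prob (bind_pmf M f) A = measure_pmf.expectation M (\<lambda>x. measure_pmf.prob (f x) A)"
proof -
  have "emeasure (measure_pmf (bind_pmf M f)) A = (\<integral>\<^sup>+x. emeasure (measure_pmf (f x)) A \<partial>M)"
    by simp
  also have "\<dots> = (\<integral>\<^sup>+x. ennreal (measure_pmf.prob (f x) A) \<partial>M)"
    by (simp add: measure_pmf.emeasure_eq_measure)
  also have "\<dots> = ennreal (measure_pmf.expectation M (\<lambda>x. measure_pmf.prob (f x) A))"
    by (rule nn_integral_eq_integral)
       (auto intro!: measure_pmf.integrable_const_bound[where B=1])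
  finally show ?thesis
    by (simp add: measure_pmf.emeasure_eq_measure)
qed

lemma expectation_split_finite:
  fixes P :: "'a pmf" and h :: "'a \<Rightarrow> real"
  assumes W: "finite W" and h: "\<And>j. 0 \<le> h j" "\<And>j. h j \<le> 1"
  shows "measure_pmf.expectation P h =
           (\<Sum>j\<in>W. pmf P j * h j) + measure_pmf.expectation P (\<lambda>j. indicator (-W) j * h j)"
proof -
  have int: "integrable (measure_pmf P) g" if "\<And>j. \<bar>g j\<bar> \<le> 1" for g :: "'a \<Rightarrow> real"
    by (intro measure_pmf.integrable_const_bound[where B=1]) (auto simp: that)
  have "measure_pmf.expectation P h = measure_pmf.expectation P (\<lambda>j. indicator W j * h j + indicator (-W) j * h j)"
    by (intro Bochner_Integration.integral_cong) (auto simp: indicator_def)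
  also have "\<dots> = measure_pmf.expectation P (\<lambda>j. indicator W j * h j) + measure_pmf.expectation P (\<lambda>j. indicator (-W) j * h j)"
    by (intro Bochner_Integration.integral_add int) (use h in \<open>auto simp: indicator_def\<close>)
  also have "measure_pmf.expectation P (\<lambda>j. indicator W j * h j) = (\<Sum>j\<in>W. pmf P j * h j)"
    by (subst integral_measure_pmf[OF W]) (auto simp: indicator_def)
  finally show ?thesis .
qed

lemma prob_bind_pmf_diff_le:
  fixes M N :: "'a pmf" and f :: "'a \<Rightarrow> 'b pmf"
  assumes W: "finite W" and c: "0 \<le> c" "c \<le> 1" and MN: "\<And>j. j \<in> W \<Longrightarrow> c * pmf N j \<le> pmf M j"
  shows "measure_pmf.prob (bind_pmf N f) A - measure_pmf.prob (bind_pmf M f) A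
           \<le> measure_pmf.prob N (-W) + (1 - c)"
proof -
  define h where "h j = measure_pmf.prob (f j) A" for j
  have h01: "0 \<le> h j" "h j \<le> 1" for j by (auto simp: h_def)
  note split = expectation_split_finite[OF W h01]
  have outside_N: "measure_pmf.expectation N (\<lambda>j. indicator (-W) j * h j) \<le> measure_pmf.prob N (-W)"
  proof -
    have "measure_pmf.expectation N (\<lambda>j. indicator (-W) j * h j) \<le> measure_pmf.expectation N (indicator (-W))"
      by (intro integral_mono measure_pmf.integrable_const_bound[where B=1])
         (use h01 in \<open>auto simp: indicator_def\<close>)
    then show ?thesis by simp
  qed
  have outside_M: "0 \<le> measure_pmf.expectation M (\<lambda>j. indicator (-W) j * h j)"
    by (intro Bochner_Integration.integral_nonneg) (use h01 in \<open>auto simp: indicator_def\<close>)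
  have inside: "c * (\<Sum>j\<in>W. pmf N j * h j) \<le> (\<Sum>j\<in>W. pmf M j * h j)"
    unfolding sum_distrib_left
    by (intro sum_mono) (use MN h01 in \<open>auto simp: mult.assoc[symmetric] intro: mult_right_mono\<close>)
  have inside_le_1: "(\<Sum>j\<in>W. pmf N j * h j) \<le> 1"
  proof -
    have "(\<Sum>j\<in>W. pmf N j * h j) \<le> (\<Sum>j\<in>W. pmf N j)"
      by (intro sum_mono) (use h01 in \<open>auto intro: mult_left_le\<close>)
    also have "\<dots> = measure_pmf.prob N W" by (simp add: measure_measure_pmf_finite[OF W])
    finally show ?thesis by (meson measure_pmf.prob_le_1 order.trans)
  qed
  have inside_nonneg: "0 \<le> (\<Sum>j\<in>W. pmf N j * h j)" by (intro sum_nonneg) (use h01 in auto)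
  have "measure_pmf.prob (bind_pmf N f) A - measure_pmf.prob (bind_pmf M f) A
      = measure_pmf.expectation N h - measure_pmf.expectation M h"
    by (simp add: prob_bind_pmf h_def[abs_def])
  also have "\<dots> \<le> (1 - c) * (\<Sum>j\<in>W. pmf N j * h j) + measure_pmf.prob N (-W)"
    using split[of N] split[of M] outside_N outside_M inside by (simp add: algebra_simps)
  also have "\<dots> \<le> (1 - c) + measure_pmf.prob N (-W)"
    using inside_le_1 inside_nonneg c by (simp add: mult_left_le)
  finally show ?thesis by simp
qed

lemma dTV_bind_pmf_le:
  fixes M N :: "'a pmf" and f :: "'a \<Rightarrow> 'b pmf"
  assumes W: "finite W" and c: "0 \<le> c" "c \<le> 1" and MN: "\<And>j. j \<in> W \<Longrightarrow> c * pmf N j \<le> pmf M j"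
  shows "dTV (bind_pmf M f) (bind_pmf N f) \<le> measure_pmf.prob N (-W) + (1 - c)"
  unfolding dTV_def
proof (rule cSUP_least)
  fix A
  have compl: "measure_pmf.prob P (-A) = 1 - measure_pmf.prob P A" for P :: "'b pmf"
    using measure_pmf.prob_compl[of A P] by (simp add: Compl_eq_Diff_UNIV)
  show "\<bar>measure_pmf.prob (bind_pmf M f) A - measure_pmf.prob (bind_pmf N f) A\<bar> \<le> measure_pmf.prob N (-W) + (1 - c)"
    using prob_bind_pmf_diff_le[OF assms, where A=A] prob_bind_pmf_diff_le[OF assms, where A="-A"]
    by (auto simp: abs_if compl)
qed simp

lemma dominated_point_exists:
  fixes M N :: "'a pmf"
  assumes W: "finite W" "W \<noteq> {}"
  obtains j where "j \<in> W" "measure_pmf.prob M W * pmf N j \<le> pmf M j"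
proof (rule ccontr)
  assume "\<not> thesis"
  with that have lt: "\<And>j. j \<in> W \<Longrightarrow> pmf M j < measure_pmf.prob M W * pmf N j" by force
  have "(\<Sum>j\<in>W. pmf M j) < (\<Sum>j\<in>W. measure_pmf.prob M W * pmf N j)"
    by (rule sum_strict_mono[OF W lt])
  also have "\<dots> = measure_pmf.prob M W * measure_pmf.prob N W"
    by (simp add: sum_distrib_left measure_measure_pmf_finite[OF W(1)])
  also have "\<dots> \<le> measure_pmf.prob M W" by (simp add: mult_left_le)
  finally show False by (simp add: measure_measure_pmf_finite[OF W(1)])
qed

lemma ratio_chain_lower_bound:
  fixes M N :: "nat \<Rightarrow> real"
  assumes N_pos: "\<And>j. 0 < N j" and b: "0 \<le> b" and \<kappa>: "0 \<le> \<kappa>"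
    and interval: "\<And>a c j. a \<in> W \<Longrightarrow> c \<in> W \<Longrightarrow> a \<le> j \<Longrightarrow> j \<le> c \<Longrightarrow> j \<in> W"
    and j0: "j0 \<in> W" "\<kappa> * N j0 \<le> M j0"
    and step_up: "\<And>j. j \<in> W \<Longrightarrow> Suc j \<in> W \<Longrightarrow> b * M j * N (Suc j) \<le> M (Suc j) * N j"
    and step_down: "\<And>j. j \<in> W \<Longrightarrow> Suc j \<in> W \<Longrightarrow> b * M (Suc j) * N j \<le> M j * N (Suc j)"
    and j: "j \<in> W"
  shows "\<kappa> * b ^ (max j j0 - min j j0) * N j \<le> M j"
proof -
  have up: "k * b * N (Suc j) \<le> M (Suc j)"
    if "j \<in> W" "Suc j \<in> W" "k * N j \<le> M j" "0 \<le> k" for j k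
  proof -
    have "k * b * N (Suc j) * N j = (b * N (Suc j)) * (k * N j)" by (simp add: ac_simps)
    also have "\<dots> \<le> (b * N (Suc j)) * M j"
      using that N_pos[of "Suc j"] b by (intro mult_left_mono) auto
    also have "\<dots> = b * M j * N (Suc j)" by (simp add: ac_simps)
    also have "\<dots> \<le> M (Suc j) * N j" by (rule step_up[OF that(1,2)])
    finally show ?thesis using N_pos[of j] by simp
  qed
  have down: "k * b * N j \<le> M j"
    if "j \<in> W" "Suc j \<in> W" "k * N (Suc j) \<le> M (Suc j)" "0 \<le> k" for j k
  proof -
    have "k * b * N j * N (Suc j) = (b * N j) * (k * N (Suc j))" by (simp add: ac_simps)
    also have "\<dots> \<le> (b * N j) * M (Suc j)"
      using that N_pos[of j] b by (intro mult_left_mono) auto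
    also have "\<dots> = b * M (Suc j) * N j" by (simp add: ac_simps)
    also have "\<dots> \<le> M j * N (Suc j)" by (rule step_down[OF that(1,2)])
    finally show ?thesis using N_pos[of "Suc j"] by simp
  qed
  have above: "\<kappa> * b ^ d * N (j0 + d) \<le> M (j0 + d)" if "j0 + d \<in> W" for d
    using that
  proof (induction d)
    case 0 then show ?case using j0 by simp
  next
    case (Suc d)
    have "j0 + d \<in> W" by (rule interval[OF j0(1) Suc.prems]) auto
    with Suc.IH have "\<kappa> * b ^ d * N (j0 + d) \<le> M (j0 + d)" .
    from up[OF \<open>j0 + d \<in> W\<close> _ this] Suc.prems \<kappa> b show ?case by (simp add: ac_simps)
  qed
  have below: "\<kappa> * b ^ d * N (j0 - d) \<le> M (j0 - d)" if "d \<le> j0" "j0 - d \<in> W" for d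
    using that
  proof (induction d)
    case 0 then show ?case using j0 by simp
  next
    case (Suc d)
    have "j0 - d \<in> W" by (rule interval[OF Suc.prems(2) j0(1)]) auto
    with Suc have IH: "\<kappa> * b ^ d * N (j0 - d) \<le> M (j0 - d)" by simp
    have "j0 - d = Suc (j0 - Suc d)" using Suc.prems by simp
    with down[of "j0 - Suc d" "\<kappa> * b ^ d"] IH Suc.prems \<open>j0 - d \<in> W\<close> \<kappa> b show ?case
      by (simp add: ac_simps)
  qed
  show ?thesis
  proof (cases "j0 \<le> j")
    case True
    then show ?thesis using above[of "j - j0"] j by simp
  next
    case False
    then show ?thesis using below[of "j0 - j"] j by simp
  qed
qed

lemma dTV_bind_pmf_window:
  fixes M N :: "nat pmf" and f :: "nat \<Rightarrow> 'b pmf"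
  assumes W: "finite W" "W \<noteq> {}"
    and interval: "\<And>a c j. a \<in> W \<Longrightarrow> c \<in> W \<Longrightarrow> a \<le> j \<Longrightarrow> j \<le> c \<Longrightarrow> j \<in> W"
    and N_pos: "\<And>j. 0 < pmf N j" and b: "0 \<le> b" and c: "0 \<le> c"
    and close: "\<And>i j. i \<in> W \<Longrightarrow> j \<in> W \<Longrightarrow> c \<le> b ^ (max i j - min i j)"
    and step_up: "\<And>j. j \<in> W \<Longrightarrow> Suc j \<in> W \<Longrightarrow> b * pmf M j * pmf N (Suc j) \<le> pmf M (Suc j) * pmf N j"
    and step_down: "\<And>j. j \<in> W \<Longrightarrow> Suc j \<in> W \<Longrightarrow> b * pmf M (Suc j) * pmf N j \<le> pmf M j * pmf N (Suc j)"
  shows "dTV (bind_pmf M f) (bind_pmf N f)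
           \<le> measure_pmf.prob N (-W) + 1 - (1 - measure_pmf.prob M (-W)) * c"
proof -
  define \<kappa> where "\<kappa> = measure_pmf.prob M W"
  have \<kappa>_eq: "\<kappa> = 1 - measure_pmf.prob M (-W)"
    using measure_pmf.prob_compl[of W M] by (simp add: \<kappa>_def Compl_eq_Diff_UNIV)
  obtain j0 where j0: "j0 \<in> W" "\<kappa> * pmf N j0 \<le> pmf M j0"
    using dominated_point_exists[OF W] unfolding \<kappa>_def by blast
  have c_le_1: "c \<le> 1" using close[OF j0(1) j0(1)] by simp
  have dominated: "\<kappa> * c * pmf N j \<le> pmf M j" if "j \<in> W" for j
  proof -
    have "\<kappa> * c * pmf N j \<le> \<kappa> * b ^ (max j j0 - min j j0) * pmf N j"
      using close[OF that j0(1)] by (intro mult_right_mono mult_left_mono) (auto simp: \<kappa>_def)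
    also have "\<dots> \<le> pmf M j"
      by (rule ratio_chain_lower_bound[OF N_pos b _ interval j0 step_up step_down that])
         (simp add: \<kappa>_def)
    finally show ?thesis .
  qed
  have "dTV (bind_pmf M f) (bind_pmf N f) \<le> measure_pmf.prob N (-W) + (1 - \<kappa> * c)"
    by (rule dTV_bind_pmf_le[OF W(1) _ _ dominated])
       (use c c_le_1 in \<open>auto simp: \<kappa>_def intro: mult_le_one\<close>)
  then show ?thesis by (simp add: \<kappa>_eq)
qed


section \<open>Second moments and tails of the binomial and Poisson laws\<close>

lemma exp_series_sums: "(\<lambda>j. (l::real) ^ j / fact j) sums exp l"
  using exp_converges[of l] by (simp add: divide_inverse mult.commute scaleR_conv_of_real)

lemma exp_series_times_j_sums: "(\<lambda>j. real j * ((l::real) ^ j / fact j)) sums (l * exp l)"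
proof -
  have "(\<lambda>i. real (Suc i) * (l ^ Suc i / fact (Suc i))) = (\<lambda>i. l * (l ^ i / fact i))"
  proof
    fix i
    have "fact (Suc i) = real (Suc i) * (fact i :: real)" by simp
    then show "real (Suc i) * (l ^ Suc i / fact (Suc i)) = l * (l ^ i / fact i)"
      by (simp del: of_nat_Suc fact_Suc)
  qed
  moreover have "(\<lambda>i. l * (l ^ i / fact i)) sums (l * exp l)"
    using sums_mult[OF exp_series_sums] .
  ultimately have "(\<lambda>i. real (Suc i) * (l ^ Suc i / fact (Suc i))) sums (l * exp l)" by simp
  then show ?thesis by (subst (asm) sums_Suc_iff) simp
qed

lemma exp_series_times_falling_sums:
  "(\<lambda>j. real j * (real j - 1) * ((l::real) ^ j / fact j)) sums (l\<^sup>2 * exp l)"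
proof -
  have "(\<lambda>i. real (Suc (Suc i)) * (real (Suc (Suc i)) - 1) * (l ^ Suc (Suc i) / fact (Suc (Suc i))))
        = (\<lambda>i. l\<^sup>2 * (l ^ i / fact i))"
  proof
    fix i
    have "real (Suc (Suc i)) - 1 = real (Suc i)" by simp
    then show "real (Suc (Suc i)) * (real (Suc (Suc i)) - 1) * (l ^ Suc (Suc i) / fact (Suc (Suc i)))
        = l\<^sup>2 * (l ^ i / fact i)"
      by (simp del: of_nat_Suc add: power2_eq_square field_simps) (simp add: algebra_simps)
  qed
  moreover have "(\<lambda>i. l\<^sup>2 * (l ^ i / fact i)) sums (l\<^sup>2 * exp l)"
    using sums_mult[OF exp_series_sums] .
  ultimately have "(\<lambda>i. real (Suc (Suc i)) * (real (Suc (Suc i)) - 1) * (l ^ Suc (Suc i) / fact (Suc (Suc i))))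
      sums (l\<^sup>2 * exp l)" by simp
  then have "(\<lambda>i. real (Suc i) * (real (Suc i) - 1) * (l ^ Suc i / fact (Suc i))) sums (l\<^sup>2 * exp l)"
    by (subst (asm) sums_Suc_iff) simp
  then show ?thesis by (subst (asm) sums_Suc_iff) simp
qed

lemma poisson_central_second_moment:
  assumes "0 < l"
  shows "(\<lambda>j. pmf (poisson_pmf l) j * (real j - l)\<^sup>2) sums l"
proof -
  have "(\<lambda>j. exp (-l) * (real j * (real j - 1) * (l ^ j / fact j) + (1 - 2 * l) * (real j * (l ^ j / fact j))
                         + l\<^sup>2 * (l ^ j / fact j)))
     sums (exp (-l) * (l\<^sup>2 * exp l + (1 - 2 * l) * (l * exp l) + l\<^sup>2 * exp l))"
    by (intro sums_mult sums_add exp_series_times_falling_sums exp_series_times_j_sums exp_series_sums)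
  moreover have "exp (-l) * (l\<^sup>2 * exp l + (1 - 2 * l) * (l * exp l) + l\<^sup>2 * exp l) = l"
    by (simp add: algebra_simps power2_eq_square exp_minus field_simps)
  moreover have "(\<lambda>j. exp (-l) * (real j * (real j - 1) * (l ^ j / fact j) + (1 - 2 * l) * (real j * (l ^ j / fact j))
                         + l\<^sup>2 * (l ^ j / fact j)))
      = (\<lambda>j. pmf (poisson_pmf l) j * (real j - l)\<^sup>2)"
    using assms by (intro ext) (simp add: algebra_simps power2_eq_square diff_divide_distrib add_divide_distrib)
  ultimately show ?thesis by simp
qed

lemma binomial_sum_one: "(\<Sum>j\<le>m. real (m choose j) * q ^ j * (1 - q) ^ (m - j)) = 1"
  using binomial_ring[of q "1 - q" m] by (simp add: atLeast0AtMost mult.commute mult.left_commute)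

text \<open>Absorption identity j (m+1 choose j) = (m+1) (m choose j-1), inside a binomial sum.\<close>
lemma binomial_sum_absorb:
  fixes q :: real
  shows "(\<Sum>j\<le>Suc m. real (Suc m choose j) * q ^ j * (1 - q) ^ (Suc m - j) * (real j * g j))
       = real (Suc m) * q * (\<Sum>j\<le>m. real (m choose j) * q ^ j * (1 - q) ^ (m - j) * g (Suc j))"
proof -
  have "(\<Sum>j\<le>Suc m. real (Suc m choose j) * q ^ j * (1 - q) ^ (Suc m - j) * (real j * g j))
      = (\<Sum>j\<le>m. real (Suc m choose Suc j) * q ^ Suc j * (1 - q) ^ (Suc m - Suc j) * (real (Suc j) * g (Suc j)))"
    by (subst sum.atMost_Suc_shift) simp
  also have "\<dots> = (\<Sum>j\<le>m. real (Suc m) * q * (real (m choose j) * q ^ j * (1 - q) ^ (m - j) * g (Suc j)))"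
  proof (rule sum.cong[OF refl])
    fix j
    have absorb: "real (Suc j) * real (Suc m choose Suc j) = real (Suc m) * real (m choose j)"
      using Suc_times_binomial[of j m] by (metis of_nat_mult)
    have "real (Suc m choose Suc j) * q ^ Suc j * (1 - q) ^ (Suc m - Suc j) * (real (Suc j) * g (Suc j))
        = (real (Suc j) * real (Suc m choose Suc j)) * q * (q ^ j * (1 - q) ^ (m - j) * g (Suc j))"
      by (simp only: power_Suc diff_Suc_Suc) (simp only: ac_simps)
    also have "\<dots> = real (Suc m) * q * (real (m choose j) * q ^ j * (1 - q) ^ (m - j) * g (Suc j))"
      by (simp only: absorb ac_simps)
    finally show "real (Suc m choose Suc j) * q ^ Suc j * (1 - q) ^ (Suc m - Suc j) * (real (Suc j) * g (Suc j))
       = real (Suc m) * q * (real (m choose j) * q ^ j * (1 - q) ^ (m - j) * g (Suc j))" .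
  qed
  finally show ?thesis by (simp add: sum_distrib_left)
qed

lemma binomial_first_moment:
  "(\<Sum>j\<le>m. real (m choose j) * q ^ j * (1 - q) ^ (m - j) * real j) = real m * q"
proof (cases m)
  case (Suc m')
  have "(\<Sum>j\<le>Suc m'. real (Suc m' choose j) * q ^ j * (1 - q) ^ (Suc m' - j) * (real j * 1))
     = real (Suc m') * q * (\<Sum>j\<le>m'. real (m' choose j) * q ^ j * (1 - q) ^ (m' - j) * 1)"
    by (rule binomial_sum_absorb)
  then show ?thesis using Suc binomial_sum_one[of m' q] by simp
qed simp

lemma binomial_factorial_moment:
  "(\<Sum>j\<le>m. real (m choose j) * q ^ j * (1 - q) ^ (m - j) * (real j * (real j - 1))) = real m * (real m - 1) * q\<^sup>2"
proof (cases m)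
  case (Suc m')
  have "(\<Sum>j\<le>Suc m'. real (Suc m' choose j) * q ^ j * (1 - q) ^ (Suc m' - j) * (real j * (real j - 1)))
     = real (Suc m') * q * (\<Sum>j\<le>m'. real (m' choose j) * q ^ j * (1 - q) ^ (m' - j) * (real (Suc j) - 1))"
    by (rule binomial_sum_absorb)
  also have "(\<Sum>j\<le>m'. real (m' choose j) * q ^ j * (1 - q) ^ (m' - j) * (real (Suc j) - 1)) = real m' * q"
    using binomial_first_moment[of m' q] by simp
  finally show ?thesis using Suc by (simp add: power2_eq_square algebra_simps)
qed simp

lemma binomial_central_second_moment:
  assumes "0 \<le> q" "q \<le> 1"
  shows "(\<Sum>j\<le>m. pmf (binomial_pmf m q) j * (real j - real m * q)\<^sup>2) = real m * q * (1 - q)"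
proof -
  have "(\<Sum>j\<le>m. pmf (binomial_pmf m q) j * (real j - real m * q)\<^sup>2)
     = (\<Sum>j\<le>m. real (m choose j) * q ^ j * (1 - q) ^ (m - j) * (real j * (real j - 1)))
       + (1 - 2 * real m * q) * (\<Sum>j\<le>m. real (m choose j) * q ^ j * (1 - q) ^ (m - j) * real j)
       + (real m * q)\<^sup>2 * (\<Sum>j\<le>m. real (m choose j) * q ^ j * (1 - q) ^ (m - j))"
    using assms by (simp add: sum_distrib_left sum.distrib[symmetric] power2_eq_square algebra_simps)
  also have "\<dots> = real m * q * (1 - q)"
    unfolding binomial_first_moment binomial_factorial_moment binomial_sum_one
    by (simp add: power2_eq_square algebra_simps)
  finally show ?thesis .
qed

lemma expectation_pmf_nat_sums:
  fixes M :: "nat pmf" and g :: "nat \<Rightarrow> real"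
  assumes g: "\<And>j. 0 \<le> g j" and s: "(\<lambda>j. pmf M j * g j) sums v"
  shows "integrable M g" and "measure_pmf.expectation M g = v"
proof -
  have nn: "(\<integral>\<^sup>+ j. ennreal (g j) \<partial>measure_pmf M) = ennreal v"
  proof -
    have "(\<integral>\<^sup>+ j. ennreal (g j) \<partial>measure_pmf M) = (\<integral>\<^sup>+ j. ennreal (pmf M j * g j) \<partial>count_space UNIV)"
      by (simp add: nn_integral_measure_pmf ennreal_mult g)
    also have "\<dots> = (\<Sum>j. ennreal (pmf M j * g j))"
      by (simp add: nn_integral_count_space_nat)
    also have "\<dots> = ennreal v"
      using s g by (subst suminf_ennreal2) (auto simp: sums_summable[OF s] sums_unique[OF s, symmetric])
    finally show ?thesis .
  qed
  have v0: "0 \<le> v" using s g sums_le[OF _ sums_zero s] by (metis pmf_nonneg zero_le_mult_iff)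
  show int: "integrable M g"
    using nn g by (intro integrableI_nonneg) auto
  have "ennreal (measure_pmf.expectation M g) = ennreal v"
    using nn_integral_eq_integral[OF int] g nn by simp
  then show "measure_pmf.expectation M g = v" using v0 by (simp add: Bochner_Integration.integral_nonneg g)
qed

lemma prob_pmf_nat_le_sums:
  fixes N :: "nat pmf" and h :: "nat \<Rightarrow> real"
  assumes h: "\<And>j. 0 \<le> h j" and B: "\<And>j. j \<in> B \<Longrightarrow> 1 \<le> h j"
    and s: "(\<lambda>j. pmf N j * h j) sums v"
  shows "measure_pmf.prob N B \<le> v"
proof -
  have "measure_pmf.prob N B = measure_pmf.expectation N (indicator B)" by simp
  also have "\<dots> \<le> measure_pmf.expectation N h"
    by (intro integral_mono expectation_pmf_nat_sums(1)[OF h s] measure_pmf.integrable_const_bound[where B=1])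
       (auto simp: indicator_def B h)
  also have "\<dots> = v" by (rule expectation_pmf_nat_sums(2)[OF h s])
  finally show ?thesis .
qed

lemma poisson_tail:
  assumes "0 < l" "0 < T"
  shows "measure_pmf.prob (poisson_pmf l) {j. T < \<bar>real j - l\<bar>} \<le> l / T\<^sup>2"
proof (rule prob_pmf_nat_le_sums[where h = "\<lambda>j. (real j - l)\<^sup>2 / T\<^sup>2"])
  fix j assume "j \<in> {j. T < \<bar>real j - l\<bar>}"
  then have "T\<^sup>2 \<le> (real j - l)\<^sup>2" using assms
    by (metis abs_le_square_iff abs_of_pos less_le mem_Collect_eq)
  then show "1 \<le> (real j - l)\<^sup>2 / T\<^sup>2" using assms by simp
next
  show "(\<lambda>j. pmf (poisson_pmf l) j * ((real j - l)\<^sup>2 / T\<^sup>2)) sums (l / T\<^sup>2)"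
    using sums_divide[OF poisson_central_second_moment[OF assms(1)], of "T\<^sup>2"] by (simp add: times_divide_eq_right)
qed simp

lemma binomial_tail:
  assumes "0 \<le> q" "q \<le> 1" "0 < T"
  shows "measure_pmf.prob (binomial_pmf m q) {j. T < \<bar>real j - real m * q\<bar>} \<le> real m * q * (1 - q) / T\<^sup>2"
proof (rule prob_pmf_nat_le_sums[where h = "\<lambda>j. (real j - real m * q)\<^sup>2 / T\<^sup>2"])
  fix j assume "j \<in> {j. T < \<bar>real j - real m * q\<bar>}"
  then have "T\<^sup>2 \<le> (real j - real m * q)\<^sup>2" using assms
    by (metis abs_le_square_iff abs_of_pos less_le mem_Collect_eq)
  then show "1 \<le> (real j - real m * q)\<^sup>2 / T\<^sup>2" using assms by simp
next
  have "(\<lambda>j. pmf (binomial_pmf m q) j * ((real j - real m * q)\<^sup>2 / T\<^sup>2)) sums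
        (\<Sum>j\<le>m. pmf (binomial_pmf m q) j * ((real j - real m * q)\<^sup>2 / T\<^sup>2))"
    using assms by (intro sums_finite) (auto simp: binomial_eq_0)
  also have "(\<Sum>j\<le>m. pmf (binomial_pmf m q) j * ((real j - real m * q)\<^sup>2 / T\<^sup>2)) = real m * q * (1 - q) / T\<^sup>2"
    using binomial_central_second_moment[OF assms(1,2), of m]
    by (simp add: sum_divide_distrib[symmetric] times_divide_eq_right)
  finally show "(\<lambda>j. pmf (binomial_pmf m q) j * ((real j - real m * q)\<^sup>2 / T\<^sup>2)) sums (real m * q * (1 - q) / T\<^sup>2)" .
qed simp


section \<open>Mixing over a binomial versus a Poisson number of samples\<close>

lemma choose_Suc_ratio:
  assumes "j \<le> m"
  shows "real (m choose Suc j) * real (Suc j) = real (m choose j) * (real m - real j)"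
proof -
  have "(m - j) * (m choose j) = Suc j * (m choose Suc j)"
    using binomial_absorb_comp[of m j] binomial_absorption[of j m] by simp
  then have "real (m - j) * real (m choose j) = real (Suc j) * real (m choose Suc j)"
    by (metis of_nat_mult)
  then show ?thesis using assms by (simp add: of_nat_diff algebra_simps)
qed

text \<open>Ratio of consecutive point probabilities: Bin(m,Q) steps by (m - j) Q / ((j+1)(1 - Q)),
  Poi(mQ) by m Q / (j+1); cross-multiplied this reads as follows.\<close>
lemma binomial_poisson_pmf_ratio:
  assumes Q: "0 < Q" "Q < 1" and j: "j < m"
  shows "pmf (binomial_pmf m Q) (Suc j) * pmf (poisson_pmf (real m * Q)) j * (real m - real m * Q)
       = pmf (binomial_pmf m Q) j * pmf (poisson_pmf (real m * Q)) (Suc j) * (real m - real j)"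
proof -
  define e where "e = m - Suc j"
  have me: "m - j = Suc e" using j by (simp add: e_def)
  define C0 C1 L where "C0 = real (m choose j)" and "C1 = real (m choose Suc j)" and "L = real m * Q"
  have L: "0 < L" using Q j by (simp add: L_def)
  have key: "C1 * real (Suc j) = C0 * (real m - real j)"
    unfolding C0_def C1_def using choose_Suc_ratio[of j m] j by simp
  have "pmf (binomial_pmf m Q) (Suc j) * pmf (poisson_pmf (real m * Q)) j * (real m - real m * Q)
      = C1 * Q ^ Suc j * (1 - Q) ^ e * (L ^ j / fact j * exp (-L)) * (real m * (1 - Q))"
    using Q L by (simp add: C1_def e_def L_def algebra_simps)
  also have "\<dots> = (C1 * real (Suc j)) * Q ^ j * (1 - Q) ^ Suc e * (L ^ Suc j / fact (Suc j) * exp (-L))"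
    by (simp add: L_def field_simps del: of_nat_Suc)
  also have "\<dots> = C0 * Q ^ j * (1 - Q) ^ (m - j) * (L ^ Suc j / fact (Suc j) * exp (-L)) * (real m - real j)"
    by (simp only: key me) (simp only: ac_simps)
  also have "\<dots> = pmf (binomial_pmf m Q) j * pmf (poisson_pmf (real m * Q)) (Suc j) * (real m - real j)"
    using Q L by (simp add: C0_def L_def)
  finally show ?thesis .
qed

lemma exp_neg_two_le_one_minus:
  fixes y :: real
  assumes y: "0 \<le> y" "y \<le> 1/2"
  shows "exp (-2 * y) \<le> 1 - y"
proof -
  have "1 + 2 * y \<le> exp (2 * y)" by (rule exp_ge_add_one_self)
  then have "exp (-2 * y) \<le> 1 / (1 + 2 * y)" using y
    by (simp add: exp_minus field_simps)
  also have "\<dots> \<le> 1 - y"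
  proof -
    have "0 \<le> y * (1 - 2 * y)" using y by simp
    then have "1 \<le> (1 - y) * (1 + 2 * y)" by (simp add: algebra_simps)
    then show ?thesis using y by (simp add: field_simps)
  qed
  finally show ?thesis .
qed

text \<open>Within distance T of the mean l = mQ, where T is at most half the gap m - l, the factors
  (m - j)/(m - l) comparing the two step ratios lie between b and 1/b, b = exp (-2T/(m - l)).\<close>
lemma binomial_poisson_step_bounds:
  fixes m j :: nat and Q T :: real
  defines "l \<equiv> real m * Q"
  defines "b \<equiv> exp (- 2 * T / (real m - l))"
  assumes Q: "0 < Q" "Q < 1" and T: "0 < T" "T \<le> (real m - l) / 2"
    and j: "\<bar>real j - l\<bar> \<le> T" "\<bar>real (Suc j) - l\<bar> \<le> T"
  shows "b * pmf (binomial_pmf m Q) j * pmf (poisson_pmf l) (Suc j)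
           \<le> pmf (binomial_pmf m Q) (Suc j) * pmf (poisson_pmf l) j"
    and "b * pmf (binomial_pmf m Q) (Suc j) * pmf (poisson_pmf l) j
           \<le> pmf (binomial_pmf m Q) j * pmf (poisson_pmf l) (Suc j)"
proof -
  have gap: "0 < real m - l" using T(1) T(2) by simp
  have b: "0 < b" "b \<le> 1" using T gap by (auto simp: b_def)
  have "real (Suc j) < real m" using j T gap by (auto simp: abs_le_iff)
  then have jm: "j < m" "real j < real m" by auto
  have ratio: "pmf (binomial_pmf m Q) (Suc j) * pmf (poisson_pmf l) j * (real m - l)
      = pmf (binomial_pmf m Q) j * pmf (poisson_pmf l) (Suc j) * (real m - real j)"
    using binomial_poisson_pmf_ratio[OF Q jm(1)] by (simp add: l_def)
  have factor_up: "b \<le> (real m - real j) / (real m - l)"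
  proof (cases "real j \<le> l")
    case True
    then have "1 \<le> (real m - real j) / (real m - l)" using gap by simp
    then show ?thesis using b by linarith
  next
    case False
    define y where "y = (real j - l) / (real m - l)"
    have y: "0 \<le> y" "y \<le> T / (real m - l)" using False j gap
      by (auto simp: y_def divide_right_mono)
    have "T / (real m - l) \<le> 1/2" using T gap by (simp add: field_simps)
    then have "y \<le> 1/2" using y by linarith
    have "b \<le> exp (-2 * y)" using y gap by (simp add: b_def divide_right_mono)
    also have "\<dots> \<le> 1 - y" by (rule exp_neg_two_le_one_minus) fact+
    also have "1 - y = (real m - real j) / (real m - l)" using gap by (simp add: y_def field_simps)
    finally show ?thesis .
  qed
  have factor_down: "b \<le> (real m - l) / (real m - real j)"
  proof (cases "l \<le> real j")
    case True
    then have "1 \<le> (real m - l) / (real m - real j)" using jm by simp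
    then show ?thesis using b by linarith
  next
    case False
    define z where "z = (l - real j) / (real m - l)"
    have z: "0 \<le> z" "z \<le> T / (real m - l)" using False j gap
      by (auto simp: z_def divide_right_mono)
    have "b \<le> exp (-z)" using z T gap by (simp add: b_def divide_right_mono)
    also have "\<dots> \<le> 1 / (1 + z)" using exp_ge_add_one_self[of z] z by (simp add: exp_minus field_simps)
    also have "1 / (1 + z) = (real m - l) / (real m - real j)" using gap by (simp add: z_def field_simps)
    finally show ?thesis .
  qed
  have "b * pmf (binomial_pmf m Q) j * pmf (poisson_pmf l) (Suc j)
      \<le> pmf (binomial_pmf m Q) j * pmf (poisson_pmf l) (Suc j) * ((real m - real j) / (real m - l))"
    using mult_left_mono[OF factor_up, of "pmf (binomial_pmf m Q) j * pmf (poisson_pmf l) (Suc j)"]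
    by (simp add: ac_simps)
  also have "\<dots> = pmf (binomial_pmf m Q) (Suc j) * pmf (poisson_pmf l) j"
    using ratio gap by (simp add: field_simps)
  finally show "b * pmf (binomial_pmf m Q) j * pmf (poisson_pmf l) (Suc j)
           \<le> pmf (binomial_pmf m Q) (Suc j) * pmf (poisson_pmf l) j" .
  have "b * pmf (binomial_pmf m Q) (Suc j) * pmf (poisson_pmf l) j
      \<le> pmf (binomial_pmf m Q) (Suc j) * pmf (poisson_pmf l) j * ((real m - l) / (real m - real j))"
    using mult_left_mono[OF factor_down, of "pmf (binomial_pmf m Q) (Suc j) * pmf (poisson_pmf l) j"]
    by (simp add: ac_simps)
  also have "\<dots> = pmf (binomial_pmf m Q) j * pmf (poisson_pmf l) (Suc j)"
    using ratio jm by (simp add: field_simps)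
  finally show "b * pmf (binomial_pmf m Q) (Suc j) * pmf (poisson_pmf l) j
           \<le> pmf (binomial_pmf m Q) j * pmf (poisson_pmf l) (Suc j)" .
qed

lemma window_within_half_gap:
  assumes m: "1 \<le> m" and s: "0 < s" "s \<le> 1/16"
  shows "sqrt (real m * s) \<le> (real m - real m * s\<^sup>2) / 2"
proof -
  have s2: "s\<^sup>2 \<le> 1/2" using s mult_mono[of s "1/16" s "1/16"] by (simp add: power2_eq_square)
  have "real m * s \<le> real m * (1/16)" using s m by simp
  also have "\<dots> \<le> real m * real m * ((1 - s\<^sup>2)\<^sup>2 / 4)"
  proof -
    have "(1/2)\<^sup>2 \<le> (1 - s\<^sup>2)\<^sup>2" using s2 by (intro power_mono) auto
    then have "1/16 \<le> (1 - s\<^sup>2)\<^sup>2 / 4" by (simp add: power2_eq_square)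
    moreover have "1 \<le> real m" using m by simp
    ultimately have "1 * (1/16) \<le> real m * ((1 - s\<^sup>2)\<^sup>2 / 4)" by (intro mult_mono) auto
    then show ?thesis using m by (simp add: mult.assoc)
  qed
  also have "\<dots> = ((real m - real m * s\<^sup>2) / 2)\<^sup>2" by (simp add: power2_eq_square algebra_simps)
  finally have "(sqrt (real m * s))\<^sup>2 \<le> ((real m - real m * s\<^sup>2) / 2)\<^sup>2" using s by simp
  moreover have "0 \<le> (real m - real m * s\<^sup>2) / 2" using s2 m by (simp add: mult_left_le)
  ultimately show ?thesis by (simp add: power2_le_iff_abs_le)
qed

lemma binomial_poisson_window_tails:
  assumes m: "1 \<le> m" and s: "0 < s" "s \<le> 1"
  defines "B \<equiv> {j. sqrt (real m * s) < \<bar>real j - real m * s\<^sup>2\<bar>}"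
  shows "measure_pmf.prob (poisson_pmf (real m * s\<^sup>2)) B \<le> s"
    and "measure_pmf.prob (binomial_pmf m (s\<^sup>2)) B \<le> s"
proof -
  have T: "0 < sqrt (real m * s)" "(sqrt (real m * s))\<^sup>2 = real m * s" using m s by auto
  have ratio: "real m * s\<^sup>2 / (sqrt (real m * s))\<^sup>2 = s" using m s by (simp add: T(2) power2_eq_square)
  have s2: "0 \<le> s\<^sup>2" "s\<^sup>2 \<le> 1" using s by (auto simp: power_le_one)
  have "measure_pmf.prob (poisson_pmf (real m * s\<^sup>2)) B \<le> real m * s\<^sup>2 / (sqrt (real m * s))\<^sup>2"
    unfolding B_def by (rule poisson_tail[OF _ T(1)]) (use m s in simp)
  then show "measure_pmf.prob (poisson_pmf (real m * s\<^sup>2)) B \<le> s" by (simp only: ratio)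
  have "measure_pmf.prob (binomial_pmf m (s\<^sup>2)) B \<le> real m * s\<^sup>2 * (1 - s\<^sup>2) / (sqrt (real m * s))\<^sup>2"
    unfolding B_def by (rule binomial_tail[OF s2 T(1)])
  also have "\<dots> \<le> real m * s\<^sup>2 / (sqrt (real m * s))\<^sup>2"
    using s2 by (intro divide_right_mono) (auto simp: mult_left_le)
  finally show "measure_pmf.prob (binomial_pmf m (s\<^sup>2)) B \<le> s" by (simp only: ratio)
qed

text \<open>Mixing a kernel over Bin(m,s^2) or over Poi(m s^2) gives laws within 10 s, for
  every m: the window W = [l - T, l + T] around l = m s^2 with T = sqrt (m s) carries all
  but s of both laws, and across W the accumulated ratio distortion is exp (-4 T^2/(m - l)).\<close>
lemma dTV_bind_binomial_poisson:
  fixes f :: "nat \<Rightarrow> 'b pmf"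
  assumes m: "1 \<le> m" and s: "0 < s" "s \<le> 1/16"
  shows "dTV (bind_pmf (binomial_pmf m (s\<^sup>2)) f) (bind_pmf (poisson_pmf (real m * s\<^sup>2)) f) \<le> 10 * s"
proof -
  define Q l T where "Q = s\<^sup>2" and "l = real m * s\<^sup>2" and "T = sqrt (real m * s)"
  define W b x where "W = {j::nat. \<bar>real j - l\<bar> \<le> T}"
    and "b = exp (- 2 * T / (real m - l))" and "x = 4 * T\<^sup>2 / (real m - l)"
  have Q: "0 < Q" "Q \<le> 1/2" using s mult_mono[of s "1/16" s "1/16"] by (auto simp: Q_def power2_eq_square)
  have T: "0 < T" "T \<le> (real m - l) / 2"
    using s m window_within_half_gap[OF m s] by (auto simp: T_def l_def)
  have gap: "0 < real m - l" using T(1) T(2) by simp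
  have T2: "T\<^sup>2 = real m * s" using s by (simp add: T_def)
  have l_pos: "0 < l" using s m by (simp add: l_def)
  have outside: "-W = {j. T < \<bar>real j - l\<bar>}" by (auto simp: W_def)
  have tail_N: "measure_pmf.prob (poisson_pmf l) (-W) \<le> s"
    and tail_M: "measure_pmf.prob (binomial_pmf m Q) (-W) \<le> s"
    using binomial_poisson_window_tails[OF m s(1)] s unfolding outside T_def l_def Q_def by auto
  have W_bounded: "W \<subseteq> {..m}" using T gap by (auto simp: W_def abs_le_iff)
  have W_nonempty: "W \<noteq> {}" using tail_M s by auto
  have close: "exp (-x) \<le> b ^ (max i j - min i j)" if "i \<in> W" "j \<in> W" for i j
  proof -
    have d: "real (max i j - min i j) \<le> 2 * T"
      using that by (auto simp: W_def abs_le_iff of_nat_diff max_def min_def)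
    have "-x \<le> real (max i j - min i j) * (- 2 * T / (real m - l))"
      using mult_right_mono[OF d, of "2 * T / (real m - l)"] T gap
      by (simp add: x_def power2_eq_square)
    then show ?thesis by (simp add: b_def exp_of_nat_mult[symmetric])
  qed
  have x: "0 \<le> x" "x \<le> 8 * s"
  proof -
    show "0 \<le> x" using gap by (simp add: x_def)
    have "x = 4 * s / (1 - Q)" using m Q by (simp add: x_def T2 l_def Q_def field_simps)
    also have "\<dots> \<le> 4 * s / (1/2)" using Q s by (intro divide_left_mono) (auto simp: Q_def)
    finally show "x \<le> 8 * s" by simp
  qed
  have "dTV (bind_pmf (binomial_pmf m Q) f) (bind_pmf (poisson_pmf l) f)
      \<le> measure_pmf.prob (poisson_pmf l) (-W) + 1 - (1 - measure_pmf.prob (binomial_pmf m Q) (-W)) * exp (-x)"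
  proof (rule dTV_bind_pmf_window[OF _ W_nonempty _ _ _ _ close])
    show "finite W" using W_bounded finite_subset by blast
    show "0 < pmf (poisson_pmf l) j" for j using l_pos by simp
    show "b * pmf (binomial_pmf m Q) j * pmf (poisson_pmf l) (Suc j) \<le> pmf (binomial_pmf m Q) (Suc j) * pmf (poisson_pmf l) j"
      and "b * pmf (binomial_pmf m Q) (Suc j) * pmf (poisson_pmf l) j \<le> pmf (binomial_pmf m Q) j * pmf (poisson_pmf l) (Suc j)"
      if "j \<in> W" "Suc j \<in> W" for j
      using binomial_poisson_step_bounds[of Q T m j] Q T that by (simp_all add: W_def b_def l_def Q_def)
  qed (auto simp: W_def b_def)
  also have "\<dots> \<le> s + 1 - (1 - s) * (1 - x)"
  proof -
    have "(1 - s) * (1 - x) \<le> (1 - measure_pmf.prob (binomial_pmf m Q) (-W)) * exp (-x)"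
      using tail_M s x exp_ge_add_one_self[of "-x"] by (intro mult_mono) auto
    then show ?thesis using tail_N by simp
  qed
  also have "\<dots> = 2 * s + x - s * x" by (simp add: algebra_simps)
  also have "\<dots> \<le> 10 * s" using s x mult_nonneg_nonneg[of s x] by linarith
  finally show ?thesis by (simp add: Q_def l_def)
qed


section \<open>Random subsets and laws of random set families\<close>

text \<open>The law of V(w) for a single object w: each of the n vertices independently with
  probability p.\<close>
definition random_subset :: "nat \<Rightarrow> real \<Rightarrow> nat set pmf" where
  "random_subset n p = map_pmf (\<lambda>g. {v\<in>{..<n}. g v}) (Pi_pmf {..<n} False (\<lambda>_. bernoulli_pmf p))"

lemma pmf_random_subset:
  assumes p: "0 \<le> p" "p \<le> 1"
  shows "pmf (random_subset n p) S = (if S \<subseteq> {..<n} then p ^ card S * (1 - p) ^ (n - card S) else 0)"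
proof (cases "S \<subseteq> {..<n}")
  case True
  have pre: "(\<lambda>g. {v\<in>{..<n}. g v}) -` {S} = Pi {..<n} (\<lambda>v. {v \<in> S})"
    using True by (auto simp: Pi_def)
  have "pmf (random_subset n p) S = (\<Prod>v\<in>{..<n}. measure_pmf.prob (bernoulli_pmf p) {v \<in> S})"
    unfolding random_subset_def pmf_map pre by (rule measure_Pi_pmf_Pi) simp
  also have "\<dots> = (\<Prod>v\<in>{..<n}. if v \<in> S then p else 1 - p)"
    using p by (intro prod.cong) (auto simp: measure_pmf_single)
  also have "\<dots> = prod (\<lambda>_. p) ({..<n} \<inter> {v. v \<in> S}) * prod (\<lambda>_. 1 - p) ({..<n} \<inter> - {v. v \<in> S})"
    by (rule prod.If_cases) simp
  also have "{..<n} \<inter> {v. v \<in> S} = S" using True by auto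
  also have "{..<n} \<inter> - {v. v \<in> S} = {..<n} - S" by auto
  also have "prod (\<lambda>_. p) S * prod (\<lambda>_. 1 - p) ({..<n} - S) = p ^ card S * (1 - p) ^ (n - card S)"
    using True by (simp add: card_Diff_subset finite_subset)
  finally show ?thesis using True by simp
next
  case False
  have "(\<lambda>g. {v\<in>{..<n}. g v}) -` {S} = {}" using False by auto
  then show ?thesis using False by (simp add: random_subset_def pmf_map)
qed

text \<open>A law on subsets of a finite set R is determined by the probabilities Pr[X \<subseteq> G]
  (by induction on card H, the point mass at H is Pr[X \<subseteq> H] minus those of proper subsets).\<close>
lemma pmf_eq_by_prob_Pow:
  fixes X Y :: "'a set pmf"
  assumes R: "finite R" and X: "set_pmf X \<subseteq> Pow R" and Y: "set_pmf Y \<subseteq> Pow R"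
    and eq: "\<And>G. G \<subseteq> R \<Longrightarrow> measure_pmf.prob X (Pow G) = measure_pmf.prob Y (Pow G)"
  shows "X = Y"
proof (rule pmf_eqI)
  fix H
  show "pmf X H = pmf Y H"
  proof (cases "H \<subseteq> R")
    case False
    then have "H \<notin> set_pmf X" "H \<notin> set_pmf Y" using X Y by auto
    then show ?thesis by (simp add: set_pmf_eq)
  next
    case True
    then show ?thesis
    proof (induction "card H" arbitrary: H rule: less_induct)
      case less
      have fH: "finite H" using less.prems R finite_subset by auto
      have split: "measure_pmf.prob Z (Pow H) = pmf Z H + (\<Sum>H'\<in>Pow H - {H}. pmf Z H')" for Z :: "'a set pmf"
        using fH by (simp add: measure_measure_pmf_finite sum.remove[of "Pow H" H])
      have "(\<Sum>H'\<in>Pow H - {H}. pmf X H') = (\<Sum>H'\<in>Pow H - {H}. pmf Y H')"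
      proof (intro sum.cong refl)
        fix H' assume H': "H' \<in> Pow H - {H}"
        then have "H' \<subset> H" by auto
        then have "card H' < card H" using fH by (simp add: psubset_card_mono)
        then show "pmf X H' = pmf Y H'" using less.hyps[of H'] \<open>H' \<subset> H\<close> less.prems by auto
      qed
      then show ?case using split[of X] split[of Y] eq[OF less.prems] by simp
    qed
  qed
qed

text \<open>In the random intersection model the columns (the sets V(w), w < m) are independent
  copies of the random subset.\<close>
lemma rim_columns:
  "map_pmf (\<lambda>f w v. f (v, w)) (rim n m p) =
   Pi_pmf {..<m} (\<lambda>_. False) (\<lambda>_. Pi_pmf {..<n} False (\<lambda>_. bernoulli_pmf p))"
proof (rule pmf_eqI)
  fix h :: "nat \<Rightarrow> nat \<Rightarrow> bool"
  define g where "g = (\<lambda>(v, w). h w v)"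
  have hg: "h = (\<lambda>w v. g (v, w))" by (simp add: g_def)
  have inj: "inj (\<lambda>(f::nat \<times> nat \<Rightarrow> bool) w v. f (v, w))"
    by (auto simp: inj_def fun_eq_iff)
  have "pmf (map_pmf (\<lambda>f w v. f (v, w)) (rim n m p)) h = pmf (rim n m p) g"
    unfolding hg by (rule pmf_map_inj'[OF inj])
  also have "\<dots> = (if (\<forall>x. x \<notin> {..<n} \<times> {..<m} \<longrightarrow> g x = False)
                   then \<Prod>x\<in>{..<n} \<times> {..<m}. pmf (bernoulli_pmf p) (g x) else 0)"
    unfolding rim_def by (rule pmf_Pi) simp
  also have "\<dots> = pmf (Pi_pmf {..<m} (\<lambda>_. False) (\<lambda>_. Pi_pmf {..<n} False (\<lambda>_. bernoulli_pmf p))) h"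
  proof (cases "\<forall>x. x \<notin> {..<n} \<times> {..<m} \<longrightarrow> g x = False")
    case True
    have "(\<Prod>x\<in>{..<n} \<times> {..<m}. pmf (bernoulli_pmf p) (g x))
        = (\<Prod>w\<in>{..<m}. \<Prod>v\<in>{..<n}. pmf (bernoulli_pmf p) (h w v))"
      by (subst prod.cartesian_product') (subst prod.swap, simp add: g_def)
    also have "\<dots> = (\<Prod>w\<in>{..<m}. pmf (Pi_pmf {..<n} False (\<lambda>_. bernoulli_pmf p)) (h w))"
      using True by (intro prod.cong refl) (subst pmf_Pi, auto simp: g_def)
    finally show ?thesis using True
      by (subst pmf_Pi) (auto simp: g_def fun_eq_iff)
  next
    case False
    then obtain v w where vw: "(v, w) \<notin> {..<n} \<times> {..<m}" "h w v" by (auto simp: g_def)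
    show ?thesis
    proof (cases "w < m")
      case True
      then have "pmf (Pi_pmf {..<n} False (\<lambda>_. bernoulli_pmf p)) (h w) = 0"
        using vw by (subst pmf_Pi) auto
      then have "(\<Prod>w\<in>{..<m}. pmf (Pi_pmf {..<n} False (\<lambda>_. bernoulli_pmf p)) (h w)) = 0"
        using True by (intro prod_zero) auto
      then show ?thesis using False by (subst pmf_Pi) auto
    next
      case False
      then have "h w \<noteq> (\<lambda>_. False)" using vw by auto
      then show ?thesis using False \<open>\<not> (\<forall>x. x \<notin> {..<n} \<times> {..<m} \<longrightarrow> g x = False)\<close>
        by (subst pmf_Pi) auto
    qed
  qed
  finally show "pmf (map_pmf (\<lambda>f w v. f (v, w)) (rim n m p)) h
      = pmf (Pi_pmf {..<m} (\<lambda>_. False) (\<lambda>_. Pi_pmf {..<n} False (\<lambda>_. bernoulli_pmf p))) h" .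
qed

definition iid_sample_set :: "'a pmf \<Rightarrow> nat \<Rightarrow> 'a set pmf" where
  "iid_sample_set \<tau> j = map_pmf (\<lambda>f. f ` {..<j}) (Pi_pmf {..<j} undefined (\<lambda>_. \<tau>))"

lemma prob_iid_sample_set_Pow: "measure_pmf.prob (iid_sample_set \<tau> j) (Pow G) = measure_pmf.prob \<tau> G ^ j"
proof -
  have "(\<lambda>f. f ` {..<j}) -` Pow G = Pi {..<j} (\<lambda>_. G)" by (auto simp: Pi_def)
  then show ?thesis unfolding iid_sample_set_def measure_map_pmf
    by (simp add: measure_Pi_pmf_Pi)
qed

lemma set_pmf_iid_sample_set: "set_pmf \<tau> \<subseteq> R \<Longrightarrow> set_pmf (iid_sample_set \<tau> j) \<subseteq> Pow R"
  by (auto simp: iid_sample_set_def set_Pi_pmf PiE_dflt_def)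

lemma prob_bind_binomial_iid_Pow:
  assumes q: "0 \<le> q" "q \<le> 1"
  shows "measure_pmf.prob (bind_pmf (binomial_pmf m q) (iid_sample_set \<tau>)) (Pow G)
           = (1 - q + q * measure_pmf.prob \<tau> G) ^ m"
proof -
  define t where "t = measure_pmf.prob \<tau> G"
  have "measure_pmf.prob (bind_pmf (binomial_pmf m q) (iid_sample_set \<tau>)) (Pow G)
      = measure_pmf.expectation (binomial_pmf m q) (\<lambda>j. t ^ j)"
    by (simp add: prob_bind_pmf prob_iid_sample_set_Pow t_def)
  also have "\<dots> = (\<Sum>k\<le>m. real (m choose k) * q ^ k * (1 - q) ^ (m - k) * t ^ k)"
    using q by (subst expectation_binomial_pmf') auto
  also have "\<dots> = (q * t + (1 - q)) ^ m"
    by (subst binomial_ring) (simp add: atLeast0AtMost power_mult_distrib algebra_simps)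
  finally show ?thesis by (simp add: t_def algebra_simps)
qed

lemma prob_bind_poisson_iid_Pow:
  assumes l: "0 < l"
  shows "measure_pmf.prob (bind_pmf (poisson_pmf l) (iid_sample_set \<tau>)) (Pow G)
           = exp (- l + l * measure_pmf.prob \<tau> G)"
proof -
  define t where "t = measure_pmf.prob \<tau> G"
  have "measure_pmf.prob (bind_pmf (poisson_pmf l) (iid_sample_set \<tau>)) (Pow G)
      = measure_pmf.expectation (poisson_pmf l) (\<lambda>j. t ^ j)"
    by (simp add: prob_bind_pmf prob_iid_sample_set_Pow t_def)
  also have "\<dots> = exp (-l) * exp (l * t)"
  proof (rule expectation_pmf_nat_sums(2))
    show "0 \<le> t ^ j" for j by (simp add: t_def)
    have "(\<lambda>j. exp (-l) * ((l * t) ^ j / fact j)) sums (exp (-l) * exp (l * t))"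
      by (intro sums_mult exp_series_sums)
    then show "(\<lambda>j. pmf (poisson_pmf l) j * t ^ j) sums (exp (-l) * exp (l * t))"
      using l by (simp add: power_mult_distrib algebra_simps)
  qed
  finally show ?thesis by (simp add: t_def exp_add[symmetric])
qed

lemma prob_cond_pmf:
  fixes D :: "'a pmf"
  assumes R: "finite R" and pos: "0 < measure_pmf.prob D R"
  shows "measure_pmf.prob D R * measure_pmf.prob (cond_pmf D R) G = measure_pmf.prob D (G \<inter> R)"
proof -
  have ne: "set_pmf D \<inter> R \<noteq> {}" using pos measure_pmf_zero_iff[of D R] by auto
  have fin: "finite (G \<inter> (set_pmf D \<inter> R))" using R by auto
  have "measure_pmf.prob (cond_pmf D R) G = measure_pmf.prob (cond_pmf D R) (G \<inter> set_pmf (cond_pmf D R))"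
    by (simp add: measure_Int_set_pmf)
  also have "\<dots> = (\<Sum>x\<in>G \<inter> (set_pmf D \<inter> R). pmf D x / measure_pmf.prob D R)"
    using ne fin by (simp add: measure_measure_pmf_finite set_cond_pmf pmf_cond)
  also have "\<dots> = measure_pmf.prob D ((G \<inter> R) \<inter> set_pmf D) / measure_pmf.prob D R"
    using fin by (simp add: measure_measure_pmf_finite sum_divide_distrib Int_ac)
  also have "measure_pmf.prob D ((G \<inter> R) \<inter> set_pmf D) = measure_pmf.prob D (G \<inter> R)"
    by (rule measure_Int_set_pmf)
  finally show ?thesis using pos by simp
qed



section \<open>Both hypergraph unions as mixtures of independent samples\<close>

definition possible_edges :: "nat \<Rightarrow> nat \<Rightarrow> nat set set" where
  "possible_edges n K = {S. S \<subseteq> {..<n} \<and> 2 \<le> card S \<and> card S \<le> K}"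

definition k_subsets :: "nat \<Rightarrow> nat \<Rightarrow> nat set set" where
  "k_subsets k n = {S. S \<subseteq> {..<n} \<and> card S = k}"

lemma finite_possible_edges: "finite (possible_edges n K)"
  by (rule finite_subset[of _ "Pow {..<n}"]) (auto simp: possible_edges_def)

lemma finite_k_subsets: "finite (k_subsets k n)"
  by (rule finite_subset[of _ "Pow {..<n}"]) (auto simp: k_subsets_def)

lemma prob_possible_edges_minus:
  assumes p: "0 \<le> p" "p \<le> 1"
  shows "measure_pmf.prob (random_subset n p) (possible_edges n K - G)
           = (\<Sum>k\<in>{2..K}. real (card (k_subsets k n - G)) * (p ^ k * (1 - p) ^ (n - k)))"
proof -
  have split: "possible_edges n K - G = (\<Union>k\<in>{2..K}. k_subsets k n - G)"
    by (auto simp: possible_edges_def k_subsets_def)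
  have "measure_pmf.prob (random_subset n p) (possible_edges n K - G)
      = (\<Sum>S\<in>possible_edges n K - G. pmf (random_subset n p) S)"
    by (rule measure_measure_pmf_finite) (use finite_possible_edges in auto)
  also have "\<dots> = (\<Sum>k\<in>{2..K}. \<Sum>S\<in>k_subsets k n - G. pmf (random_subset n p) S)"
    unfolding split by (rule sum.UNION_disjoint) (auto simp: finite_k_subsets k_subsets_def)
  also have "\<dots> = (\<Sum>k\<in>{2..K}. \<Sum>S\<in>k_subsets k n - G. p ^ k * (1 - p) ^ (n - k))"
    using p by (intro sum.cong refl) (auto simp: pmf_random_subset k_subsets_def)
  finally show ?thesis by simp
qed

lemma union_Hk_edges:
  "(\<Union>k\<in>{2..K}. Hk_edges k n m f) = {Vobj n f w | w. w < m \<and> Vobj n f w \<in> possible_edges n K}"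
proof (intro set_eqI iffI)
  fix X assume "X \<in> (\<Union>k\<in>{2..K}. Hk_edges k n m f)"
  then obtain k w where kw: "k \<in> {2..K}" "w < m" "card (Vobj n f w) = k" "X = Vobj n f w"
    unfolding Hk_edges_def by blast
  then have "Vobj n f w \<in> possible_edges n K" by (auto simp: possible_edges_def Vobj_def)
  then show "X \<in> {Vobj n f w | w. w < m \<and> Vobj n f w \<in> possible_edges n K}" using kw by blast
next
  fix X assume "X \<in> {Vobj n f w | w. w < m \<and> Vobj n f w \<in> possible_edges n K}"
  then obtain w where w: "w < m" "Vobj n f w \<in> possible_edges n K" "X = Vobj n f w" by blast
  then have "card (Vobj n f w) \<in> {2..K}" by (simp add: possible_edges_def)
  moreover have "X \<in> Hk_edges (card (Vobj n f w)) n m f" using w unfolding Hk_edges_def by blast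
  ultimately show "X \<in> (\<Union>k\<in>{2..K}. Hk_edges k n m f)" by blast
qed

lemma set_pmf_union_rim: "set_pmf (union_rim K n m p) \<subseteq> Pow (possible_edges n K)"
  by (auto simp: union_rim_def Hk_edges_def Vobj_def possible_edges_def)

text \<open>All edges of the union lie in G iff no object w has V(w) \<in> R - G; the objects are
  independent.\<close>
lemma prob_union_rim_Pow:
  "measure_pmf.prob (union_rim K n m p) (Pow G)
     = (1 - measure_pmf.prob (random_subset n p) (possible_edges n K - G)) ^ m"
proof -
  define cols where "cols = (\<lambda>(f::nat \<times> nat \<Rightarrow> bool) w v. f (v, w))"
  define C where "C = {g. {v\<in>{..<n}. g v} \<notin> possible_edges n K - G}"
  have col_set: "{v\<in>{..<n}. cols f w v} = Vobj n f w" for f w by (simp add: cols_def Vobj_def)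
  have "f \<in> (\<lambda>f. \<Union>k\<in>{2..K}. Hk_edges k n m f) -` Pow G \<longleftrightarrow> f \<in> cols -` Pi {..<m} (\<lambda>_. C)" for f
  proof -
    have "f \<in> (\<lambda>f. \<Union>k\<in>{2..K}. Hk_edges k n m f) -` Pow G
        \<longleftrightarrow> (\<forall>w<m. Vobj n f w \<in> possible_edges n K \<longrightarrow> Vobj n f w \<in> G)"
      unfolding vimage_eq Pow_iff union_Hk_edges by blast
    also have "\<dots> \<longleftrightarrow> (\<forall>w<m. cols f w \<in> C)"
      unfolding C_def mem_Collect_eq col_set by auto
    finally show ?thesis by (simp add: Pi_def)
  qed
  then have "(\<lambda>f. \<Union>k\<in>{2..K}. Hk_edges k n m f) -` Pow G = cols -` Pi {..<m} (\<lambda>_. C)"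
    by blast
  then have "measure_pmf.prob (union_rim K n m p) (Pow G) = measure_pmf.prob (map_pmf cols (rim n m p)) (Pi {..<m} (\<lambda>_. C))"
    unfolding union_rim_def by simp
  also have "\<dots> = (\<Prod>w\<in>{..<m}. measure_pmf.prob (Pi_pmf {..<n} False (\<lambda>_. bernoulli_pmf p)) C)"
    unfolding cols_def rim_columns by (rule measure_Pi_pmf_Pi) simp
  also have "measure_pmf.prob (Pi_pmf {..<n} False (\<lambda>_. bernoulli_pmf p)) C
      = measure_pmf.prob (random_subset n p) (- (possible_edges n K - G))"
    by (simp add: random_subset_def C_def vimage_def)
  also have "\<dots> = 1 - measure_pmf.prob (random_subset n p) (possible_edges n K - G)"
    using measure_pmf.prob_compl[of "possible_edges n K - G" "random_subset n p"]
    by (simp add: Compl_eq_Diff_UNIV)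
  finally show ?thesis by simp
qed

lemma set_pmf_union_binom: "set_pmf (union_binom K n r) \<subseteq> Pow (possible_edges n K)"
proof
  fix X assume "X \<in> set_pmf (union_binom K n r)"
  then obtain H where H: "H \<in> set_pmf (Pi_pmf {2..K} {} (\<lambda>k. binom_hyp k n (r k)))" and XH: "X = (\<Union>k\<in>{2..K}. H k)"
    by (auto simp: union_binom_def)
  have "H k \<in> set_pmf (binom_hyp k n (r k))" if "k \<in> {2..K}" for k
    using H that by (simp add: set_Pi_pmf PiE_dflt_def)
  moreover have "set_pmf (binom_hyp k n (r k)) \<subseteq> Pow (k_subsets k n)" for k
    by (auto simp: binom_hyp_def k_subsets_def)
  moreover have "k_subsets k n \<subseteq> possible_edges n K" if "k \<in> {2..K}" for k
    using that by (auto simp: k_subsets_def possible_edges_def)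
  ultimately have "H k \<subseteq> possible_edges n K" if "k \<in> {2..K}" for k
    using that by blast
  then show "X \<in> Pow (possible_edges n K)" unfolding XH by blast
qed

text \<open>Each k-set outside G is independently absent with probability exp (-m p^k (1-p)^(n-k)).\<close>
lemma prob_union_binom_Pow:
  assumes p: "0 \<le> p" "p \<le> 1"
  shows "measure_pmf.prob (union_binom K n (\<lambda>k. 1 - exp (- (real m * p ^ k * (1 - p) ^ (n - k))))) (Pow G)
       = exp (- (real m * measure_pmf.prob (random_subset n p) (possible_edges n K - G)))"
proof -
  define x where "x k = real m * p ^ k * (1 - p) ^ (n - k)" for k
  define r where "r k = 1 - exp (- x k)" for k
  have r01: "0 \<le> r k" "r k \<le> 1" for k using p by (auto simp: r_def x_def)
  have one_size: "measure_pmf.prob (binom_hyp k n (r k)) (Pow G) = exp (- (real (card (k_subsets k n - G)) * x k))" for k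
  proof -
    have pre: "(\<lambda>g. {S. S \<subseteq> {..<n} \<and> card S = k \<and> g S}) -` Pow G
        = Pi (k_subsets k n) (\<lambda>S. if S \<in> G then UNIV else {False})"
      by (auto simp: k_subsets_def Pi_def split: if_splits)
    have "measure_pmf.prob (binom_hyp k n (r k)) (Pow G)
        = (\<Prod>S\<in>k_subsets k n. measure_pmf.prob (bernoulli_pmf (r k)) (if S \<in> G then UNIV else {False}))"
      unfolding binom_hyp_def measure_map_pmf pre k_subsets_def[symmetric]
      by (rule measure_Pi_pmf_Pi) (rule finite_k_subsets)
    also have "\<dots> = (\<Prod>S\<in>k_subsets k n. if S \<in> G then 1 else exp (- x k))"
      using r01[of k] by (intro prod.cong refl) (auto simp: measure_pmf_single r_def)
    also have "\<dots> = (\<Prod>S\<in>k_subsets k n - G. exp (- x k))"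
      by (rule prod.mono_neutral_cong_right) (auto simp: finite_k_subsets)
    finally show ?thesis by (simp add: exp_of_nat_mult[symmetric])
  qed
  have pre: "(\<lambda>H. \<Union>k\<in>{2..K}. H k) -` Pow G = Pi {2..K} (\<lambda>_. Pow G)"
    by (simp add: set_eq_iff Pi_def UN_subset_iff Ball_def)
  have "measure_pmf.prob (union_binom K n r) (Pow G) = (\<Prod>k\<in>{2..K}. measure_pmf.prob (binom_hyp k n (r k)) (Pow G))"
    unfolding union_binom_def measure_map_pmf pre by (rule measure_Pi_pmf_Pi) simp
  also have "\<dots> = exp (- (\<Sum>k\<in>{2..K}. real (card (k_subsets k n - G)) * x k))"
    by (simp add: one_size exp_sum[symmetric] sum_negf)
  also have "(\<Sum>k\<in>{2..K}. real (card (k_subsets k n - G)) * x k)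
      = real m * measure_pmf.prob (random_subset n p) (possible_edges n K - G)"
    by (simp add: prob_possible_edges_minus[OF p] sum_distrib_left x_def algebra_simps)
  finally show ?thesis by (simp add: r_def x_def)
qed

lemma prob_minus_eq:
  "measure_pmf.prob D (R - G) = measure_pmf.prob D R - measure_pmf.prob D (G \<inter> R)"
proof -
  have "R - G = R - (G \<inter> R)" by auto
  then show ?thesis by (simp add: measure_pmf.finite_measure_Diff)
qed

lemma union_rim_eq_binomial_mixture:
  assumes pos: "0 < measure_pmf.prob (random_subset n p) (possible_edges n K)"
  shows "union_rim K n m p = bind_pmf (binomial_pmf m (measure_pmf.prob (random_subset n p) (possible_edges n K)))
                                       (iid_sample_set (cond_pmf (random_subset n p) (possible_edges n K)))"
proof -
  define Q where "Q = measure_pmf.prob (random_subset n p) (possible_edges n K)"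
  define \<tau> where "\<tau> = cond_pmf (random_subset n p) (possible_edges n K)"
  have Q01: "0 \<le> Q" "Q \<le> 1" by (auto simp: Q_def)
  have cond: "Q * measure_pmf.prob \<tau> G = measure_pmf.prob (random_subset n p) (G \<inter> possible_edges n K)" for G
    unfolding Q_def \<tau>_def by (rule prob_cond_pmf[OF finite_possible_edges pos])
  have "set_pmf \<tau> \<subseteq> possible_edges n K"
    using pos measure_pmf_zero_iff[of "random_subset n p" "possible_edges n K"] by (auto simp: \<tau>_def set_cond_pmf)
  then have "union_rim K n m p = bind_pmf (binomial_pmf m Q) (iid_sample_set \<tau>)"
  proof (intro pmf_eq_by_prob_Pow[OF finite_possible_edges set_pmf_union_rim])
    fix G
    show "measure_pmf.prob (union_rim K n m p) (Pow G) = measure_pmf.prob (bind_pmf (binomial_pmf m Q) (iid_sample_set \<tau>)) (Pow G)"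
      unfolding prob_union_rim_Pow prob_bind_binomial_iid_Pow[OF Q01] prob_minus_eq cond[symmetric] Q_def[symmetric]
      by (simp add: algebra_simps)
  qed (use set_pmf_iid_sample_set in fastforce)
  then show ?thesis by (simp add: Q_def \<tau>_def)
qed

lemma union_binom_eq_poisson_mixture:
  assumes p: "0 \<le> p" "p \<le> 1" and m: "0 < m"
    and pos: "0 < measure_pmf.prob (random_subset n p) (possible_edges n K)"
  shows "union_binom K n (\<lambda>k. 1 - exp (- (real m * p ^ k * (1 - p) ^ (n - k))))
         = bind_pmf (poisson_pmf (real m * measure_pmf.prob (random_subset n p) (possible_edges n K)))
                    (iid_sample_set (cond_pmf (random_subset n p) (possible_edges n K)))"
proof -
  define Q where "Q = measure_pmf.prob (random_subset n p) (possible_edges n K)"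
  define \<tau> where "\<tau> = cond_pmf (random_subset n p) (possible_edges n K)"
  have mQ: "0 < real m * Q" using m pos by (simp add: Q_def)
  have cond: "Q * measure_pmf.prob \<tau> G = measure_pmf.prob (random_subset n p) (G \<inter> possible_edges n K)" for G
    unfolding Q_def \<tau>_def by (rule prob_cond_pmf[OF finite_possible_edges pos])
  have "set_pmf \<tau> \<subseteq> possible_edges n K"
    using pos measure_pmf_zero_iff[of "random_subset n p" "possible_edges n K"] by (auto simp: \<tau>_def set_cond_pmf)
  then have "union_binom K n (\<lambda>k. 1 - exp (- (real m * p ^ k * (1 - p) ^ (n - k))))
      = bind_pmf (poisson_pmf (real m * Q)) (iid_sample_set \<tau>)"
  proof (intro pmf_eq_by_prob_Pow[OF finite_possible_edges set_pmf_union_binom])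
    fix G
    show "measure_pmf.prob (union_binom K n (\<lambda>k. 1 - exp (- (real m * p ^ k * (1 - p) ^ (n - k))))) (Pow G)
        = measure_pmf.prob (bind_pmf (poisson_pmf (real m * Q)) (iid_sample_set \<tau>)) (Pow G)"
      unfolding prob_union_binom_Pow[OF p] prob_bind_poisson_iid_Pow[OF mQ] prob_minus_eq cond[symmetric] Q_def[symmetric]
      by (simp add: algebra_simps)
  qed (use set_pmf_iid_sample_set in fastforce)
  then show ?thesis by (simp add: Q_def \<tau>_def)
qed

text \<open>If no possible edge can occur, both unions are almost surely empty.\<close>
lemma union_rim_eq_union_binom_degenerate:
  assumes p: "0 \<le> p" "p \<le> 1" and zero: "measure_pmf.prob (random_subset n p) (possible_edges n K) = 0"
  shows "union_rim K n m p = union_binom K n (\<lambda>k. 1 - exp (- (real m * p ^ k * (1 - p) ^ (n - k))))"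
proof (rule pmf_eq_by_prob_Pow[OF finite_possible_edges set_pmf_union_rim set_pmf_union_binom])
  fix G
  have "measure_pmf.prob (random_subset n p) (possible_edges n K - G) \<le> measure_pmf.prob (random_subset n p) (possible_edges n K)"
    by (rule measure_pmf.finite_measure_mono) auto
  then have "measure_pmf.prob (random_subset n p) (possible_edges n K - G) = 0"
    using zero by (simp add: order_antisym)
  then show "measure_pmf.prob (union_rim K n m p) (Pow G)
      = measure_pmf.prob (union_binom K n (\<lambda>k. 1 - exp (- (real m * p ^ k * (1 - p) ^ (n - k))))) (Pow G)"
    unfolding prob_union_rim_Pow prob_union_binom_Pow[OF p] by simp
qed

section \<open>The main estimate\<close>

lemma dTV_unions_le:
  assumes p: "0 \<le> p" "p \<le> 1" and m: "0 < m"
    and small: "measure_pmf.prob (random_subset n p) (possible_edges n K) \<le> 1/256"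
  shows "dTV (union_rim K n m p) (union_binom K n (\<lambda>k. 1 - exp (- (real m * p ^ k * (1 - p) ^ (n - k)))))
           \<le> 10 * sqrt (measure_pmf.prob (random_subset n p) (possible_edges n K))"
proof (cases "measure_pmf.prob (random_subset n p) (possible_edges n K) = 0")
  case True
  then show ?thesis by (simp add: union_rim_eq_union_binom_degenerate[OF p True] dTV_self)
next
  case False
  define Q where "Q = measure_pmf.prob (random_subset n p) (possible_edges n K)"
  have pos: "0 < Q" using False by (simp add: Q_def less_le)
  have "sqrt Q \<le> sqrt (1/256)" using small by (simp add: Q_def)
  also have "sqrt (1/256) = (1/16::real)" by (rule real_sqrt_unique) (auto simp: power2_eq_square)
  finally have "sqrt Q \<le> 1/16" .
  with pos m have "dTV (bind_pmf (binomial_pmf m ((sqrt Q)\<^sup>2)) (iid_sample_set (cond_pmf (random_subset n p) (possible_edges n K))))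
       (bind_pmf (poisson_pmf (real m * (sqrt Q)\<^sup>2)) (iid_sample_set (cond_pmf (random_subset n p) (possible_edges n K))))
       \<le> 10 * sqrt Q"
    by (intro dTV_bind_binomial_poisson) auto
  with pos show ?thesis
    by (simp add: union_rim_eq_binomial_mixture union_binom_eq_poisson_mixture p m Q_def)
qed

lemma prob_possible_edge_le:
  assumes p: "0 \<le> p" "p \<le> 1" and np: "real n * p \<le> 1"
  shows "measure_pmf.prob (random_subset n p) (possible_edges n K) \<le> real K * (real n * p)\<^sup>2"
proof -
  have "measure_pmf.prob (random_subset n p) (possible_edges n K)
      = (\<Sum>k\<in>{2..K}. real (card (k_subsets k n)) * (p ^ k * (1 - p) ^ (n - k)))"
    using prob_possible_edges_minus[OF p, of n K "{}"] by simp
  also have "\<dots> \<le> (\<Sum>k\<in>{2..K}. (real n * p)\<^sup>2)"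
  proof (rule sum_mono)
    fix k assume k: "k \<in> {2..K}"
    have "card (k_subsets k n) = n choose k"
      unfolding k_subsets_def using n_subsets[of "{..<n}" k] by simp
    moreover have "n choose k \<le> n ^ k"
      by (cases "k \<le> n") (auto simp: binomial_le_pow binomial_eq_0)
    ultimately have "real (card (k_subsets k n)) \<le> real n ^ k"
      by (metis of_nat_le_iff of_nat_power)
    moreover have "p ^ k * (1 - p) ^ (n - k) \<le> p ^ k"
      using p by (simp add: mult_left_le power_le_one)
    ultimately have "real (card (k_subsets k n)) * (p ^ k * (1 - p) ^ (n - k)) \<le> real n ^ k * p ^ k"
      using p by (intro mult_mono) auto
    also have "\<dots> = (real n * p) ^ k" by (simp add: power_mult_distrib)
    also have "\<dots> \<le> (real n * p)\<^sup>2" using k np p by (intro power_decreasing) auto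
    finally show "real (card (k_subsets k n)) * (p ^ k * (1 - p) ^ (n - k)) \<le> (real n * p)\<^sup>2" .
  qed
  also have "\<dots> \<le> real K * (real n * p)\<^sup>2" by (simp add: mult_right_mono)
  finally show ?thesis .
qed

lemma prob_possible_edge_tendsto_zero:
  fixes p :: "nat \<Rightarrow> real"
  assumes p: "\<And>n. 0 \<le> p n \<and> p n \<le> 1" and small: "p \<in> o(\<lambda>n. 1 / real n)"
  shows "(\<lambda>n. measure_pmf.prob (random_subset n (p n)) (possible_edges n K)) \<longlonglongrightarrow> 0"
proof (rule tendsto_sandwich[of "\<lambda>_. 0" _ _ "\<lambda>n. real K * (real n * p n)\<^sup>2"])
  have np: "(\<lambda>n. real n * p n) \<longlonglongrightarrow> 0"
    using smalloD_tendsto[OF small] by (simp add: field_simps)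
  have "measure_pmf.prob (random_subset n (p n)) (possible_edges n K) \<le> real K * (real n * p n)\<^sup>2"
    if "real n * p n < 1" for n
    using p[of n] that by (intro prob_possible_edge_le) auto
  then show "\<forall>\<^sub>F n in sequentially. measure_pmf.prob (random_subset n (p n)) (possible_edges n K) \<le> real K * (real n * p n)\<^sup>2"
    using eventually_mono[OF order_tendstoD(2)[OF np, of 1]] by simp
  have "(\<lambda>n. real K * (real n * p n)\<^sup>2) \<longlonglongrightarrow> real K * 0\<^sup>2"
    by (intro tendsto_intros np)
  then show "(\<lambda>n. real K * (real n * p n)\<^sup>2) \<longlonglongrightarrow> 0" by simp
qed auto

theorem lemma2:
  fixes K :: nat and m :: "nat \<Rightarrow> nat" and p :: "nat \<Rightarrow> real"
  assumes "K \<ge> 2"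
    and "\<And>n. m n > 0"
    and "\<And>n. 0 \<le> p n \<and> p n \<le> 1"
    and "p \<in> o(\<lambda>n. 1 / real n)"
  shows "(\<lambda>n. dTV (union_rim K n (m n) (p n))
                  (union_binom K n (\<lambda>k. 1 - exp (- (real (m n) * p n ^ k * (1 - p n) ^ (n - k))))))
           \<longlonglongrightarrow> 0"
proof (rule tendsto_sandwich[of "\<lambda>_. 0" _ _ "\<lambda>n. 10 * sqrt (measure_pmf.prob (random_subset n (p n)) (possible_edges n K))"])
  have Q: "(\<lambda>n. measure_pmf.prob (random_subset n (p n)) (possible_edges n K)) \<longlonglongrightarrow> 0"
    by (rule prob_possible_edge_tendsto_zero[OF assms(3,4)])
  show "\<forall>\<^sub>F n in sequentially.
      dTV (union_rim K n (m n) (p n)) (union_binom K n (\<lambda>k. 1 - exp (- (real (m n) * p n ^ k * (1 - p n) ^ (n - k)))))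
        \<le> 10 * sqrt (measure_pmf.prob (random_subset n (p n)) (possible_edges n K))"
    using eventually_mono[OF order_tendstoD(2)[OF Q, of "1/256"]] assms(2,3) dTV_unions_le by simp
  have "(\<lambda>n. 10 * sqrt (measure_pmf.prob (random_subset n (p n)) (possible_edges n K))) \<longlonglongrightarrow> 10 * sqrt 0"
    by (intro tendsto_intros Q)
  then show "(\<lambda>n. 10 * sqrt (measure_pmf.prob (random_subset n (p n)) (possible_edges n K))) \<longlonglongrightarrow> 0"
    by simp
qed (auto simp: dTV_nonneg)

end
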